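(* Let $\mathcal{T}$ be a directed poset, $X:\mathcal{T}\to\mathbf{Set}_*$ a diagram of pointed sets and $A$ a torsion-free abelian group. Then $H(X,A)$ is torsion free.
   Context: A directed poset $\mathcal{T}$ is regarded as a category with a single morphism $t\to s$ whenever $t\ge s$. For a pointed set $Y$, $Y\wedge A:=\bigoplus_{Y\setminus\{*\}}A$ (finitely supported pointed maps $Y\to A$), functorial in pointed maps via $f_*(sv)=f(s)v$, where $sv$ is the element with value $v$ at $s$ ($*v=0$). Define $G(X,A):=\lim_\mathcal{T}(X\wedge A)$, let $K(X,A)$ be the image of the injective natural map $\rho:(\lim_\mathcal{T}X)\wedge A\to G(X,A)$, $\rho(xv)(t)=x(t)v$, and $H(X,A):=G(X,A)/K(X,A)=\mathrm{coker}\,\rho$. *)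

theory Defs
  imports Main
begin

definition nmul :: "nat \<Rightarrow> 'a::ab_group_add \<Rightarrow> 'a" where
  "nmul n a = (\<Sum>_<n. a)"

definition torsion_free_group :: "'a::ab_group_add itself \<Rightarrow> bool" where
  "torsion_free_group _ \<longleftrightarrow> (\<forall>(n::nat) (a::'a). n > 0 \<longrightarrow> nmul n a = 0 \<longrightarrow> a = 0)"

definition directed :: "'t::order itself \<Rightarrow> bool" where
  "directed _ \<longleftrightarrow> (\<forall>a b :: 't. \<exists>c. a \<le> c \<and> b \<le> c)"

(* A diagram T -> Set_* : pointed sets X t with basepoint p t, and for s \<le> t
   (the morphism t -> s) a pointed map f t s : X t -> X s, functorially. *)
definition pointed_diagram ::
  "('t::order \<Rightarrow> 'x set) \<Rightarrow> ('t \<Rightarrow> 'x) \<Rightarrow> ('t \<Rightarrow> 't \<Rightarrow> 'x \<Rightarrow> 'x) \<Rightarrow> bool" where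
  "pointed_diagram X p f \<longleftrightarrow>
     (\<forall>t. p t \<in> X t) \<and>
     (\<forall>t s. s \<le> t \<longrightarrow> f t s ` X t \<subseteq> X s \<and> f t s (p t) = p s) \<and>
     (\<forall>t. \<forall>x\<in>X t. f t t x = x) \<and>
     (\<forall>t s r. r \<le> s \<longrightarrow> s \<le> t \<longrightarrow> (\<forall>x\<in>X t. f s r (f t s x) = f t r x))"

(* Y \<wedge> A : finitely supported pointed maps Y -> A (basepoint q) *)
definition smash :: "'x set \<Rightarrow> 'x \<Rightarrow> ('x \<Rightarrow> 'a::zero) set" where
  "smash Y q = {v. finite {y. v y \<noteq> 0} \<and> (\<forall>y. v y \<noteq> 0 \<longrightarrow> y \<in> Y \<and> y \<noteq> q)}"

(* functoriality: g_*(s v) = g(s) v, extended additively; q' is the target basepoint *)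
definition push :: "'y \<Rightarrow> ('x \<Rightarrow> 'y) \<Rightarrow> ('x \<Rightarrow> 'a::comm_monoid_add) \<Rightarrow> 'y \<Rightarrow> 'a" where
  "push q' g v = (\<lambda>z. if z = q' then 0 else (\<Sum>y\<in>{y. v y \<noteq> 0 \<and> g y = z}. v y))"

definition limX :: "('t::order \<Rightarrow> 'x set) \<Rightarrow> ('t \<Rightarrow> 't \<Rightarrow> 'x \<Rightarrow> 'x) \<Rightarrow> ('t \<Rightarrow> 'x) set" where
  "limX X f = {x. (\<forall>t. x t \<in> X t) \<and> (\<forall>t s. s \<le> t \<longrightarrow> f t s (x t) = x s)}"

(* G(X,A) = lim_T (X \<wedge> A) *)
definition G :: "('t::order \<Rightarrow> 'x set) \<Rightarrow> ('t \<Rightarrow> 'x) \<Rightarrow> ('t \<Rightarrow> 't \<Rightarrow> 'x \<Rightarrow> 'x)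
                 \<Rightarrow> ('t \<Rightarrow> 'x \<Rightarrow> 'a::comm_monoid_add) set" where
  "G X p f = {g. (\<forall>t. g t \<in> smash (X t) (p t)) \<and>
                 (\<forall>t s. s \<le> t \<longrightarrow> push (p s) (f t s) (g t) = g s)}"

(* rho : (lim X) \<wedge> A -> G(X,A), rho(x v)(t) = x(t) v *)
definition rho :: "('t \<Rightarrow> 'x) \<Rightarrow> (('t \<Rightarrow> 'x) \<Rightarrow> 'a::comm_monoid_add) \<Rightarrow> 't \<Rightarrow> 'x \<Rightarrow> 'a" where
  "rho p \<phi> = (\<lambda>t. push (p t) (\<lambda>x. x t) \<phi>)"

definition K :: "('t::order \<Rightarrow> 'x set) \<Rightarrow> ('t \<Rightarrow> 'x) \<Rightarrow> ('t \<Rightarrow> 't \<Rightarrow> 'x \<Rightarrow> 'x)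
                 \<Rightarrow> ('t \<Rightarrow> 'x \<Rightarrow> 'a::comm_monoid_add) set" where
  "K X p f = rho p ` smash (limX X f) p"

(* H(X,A) = G/K is torsion free: n[g] = 0 in G/K (n > 0) implies [g] = 0 *)
definition H_torsion_free :: "('t::order \<Rightarrow> 'x set) \<Rightarrow> ('t \<Rightarrow> 'x) \<Rightarrow> ('t \<Rightarrow> 't \<Rightarrow> 'x \<Rightarrow> 'x)
                 \<Rightarrow> 'a::ab_group_add itself \<Rightarrow> bool" where
  "H_torsion_free X p f _ \<longleftrightarrow>
     (\<forall>(g :: 't \<Rightarrow> 'x \<Rightarrow> 'a) \<in> G X p f. \<forall>n::nat. n > 0 \<longrightarrow> (\<lambda>t y. nmul n (g t y)) \<in> K X p f \<longrightarrow> g \<in> K X p f)"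

end

theory Submission
  imports Defs
begin

text \<open>Let \<open>n g = \<rho>(\<phi>)\<close> with \<open>\<phi>\<close> supported on finitely many threads \<open>x\<^sub>1, \<dots>, x\<^sub>k \<in> lim X\<close>.
  Since \<open>\<T>\<close> is directed, there is a single stage \<open>c\<close> at which the threads are pairwise
  distinct and away from the basepoint, so the coefficient of \<open>x\<^sub>i(c)\<close> in \<open>\<rho>(\<phi>)(c)\<close> is
  exactly \<open>\<phi>(x\<^sub>i)\<close>. Hence every \<open>\<phi>(x\<^sub>i)\<close> is divisible by \<open>n\<close>, say \<open>\<phi> = n \<psi>\<close>, and
  \<open>n g = n \<rho>(\<psi>)\<close> gives \<open>g = \<rho>(\<psi>)\<close> because \<open>A\<close> is torsion free.\<close>

lemma nmul_sum: "nmul n (sum h S) = (\<Sum>y\<in>S. nmul n (h y))"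
  unfolding nmul_def by (rule sum.swap)

lemma nmul_diff: "nmul n (a - b) = nmul n a - nmul n b"
  unfolding nmul_def by (simp add: sum_subtractf)

lemma nmul_zero [simp]: "nmul n 0 = 0"
  unfolding nmul_def by simp

lemma torsion_free_nmul_cancel:
  fixes a b :: "'a::ab_group_add"
  assumes "torsion_free_group TYPE('a)" and "n > 0" and "nmul n a = nmul n b"
  shows "a = b"
proof -
  have "nmul n (a - b) = 0" using assms(3) by (simp add: nmul_diff)
  then have "a - b = 0" using assms(1,2) unfolding torsion_free_group_def by blast
  then show ?thesis by simp
qed

lemma directed_finite_upper_bound:
  assumes "directed TYPE('t::order)" and "finite (F::'t set)"
  shows "\<exists>c. \<forall>s\<in>F. s \<le> c"
  using assms(2)
proof (induction F rule: finite_induct)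
  case empty then show ?case by simp
next
  case (insert a F)
  then obtain c where c: "\<forall>s\<in>F. s \<le> c" by blast
  from assms(1) obtain e where "a \<le> e" "c \<le> e" unfolding directed_def by blast
  with c show ?case by (metis insert_iff order_trans)
qed

lemma push_eq_sum:
  assumes "finite S" and "{x. h x \<noteq> 0} \<subseteq> S"
  shows "push q g h z = (if z = q then 0 else (\<Sum>x\<in>{x\<in>S. g x = z}. h x))"
  unfolding push_def
  by (auto intro!: sum.mono_neutral_left simp: assms(1)) (use assms(2) in auto)

lemma limX_separating_stage:
  assumes "directed TYPE('t::order)" and "pointed_diagram X p f"
    and "finite S" and "S \<subseteq> limX X f" and "x \<in> S" and "x \<noteq> p"
  shows "\<exists>c::'t. x c \<noteq> p c \<and> (\<forall>y\<in>S. y c = x c \<longrightarrow> y = x)"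
proof -
  have lim: "\<And>y s t. y \<in> S \<Longrightarrow> s \<le> t \<Longrightarrow> f t s (y t) = y s"
    using assms(4) unfolding limX_def by blast
  have base: "\<And>s t. s \<le> t \<Longrightarrow> f t s (p t) = p s"
    using assms(2) unfolding pointed_diagram_def by blast
  obtain s0 where s0: "x s0 \<noteq> p s0" using assms(6) by (metis ext)
  have "\<forall>y\<in>S - {x}. \<exists>s. y s \<noteq> x s" by (metis DiffE insertI1 ext)
  then obtain sep where sep: "\<forall>y\<in>S - {x}. y (sep y) \<noteq> x (sep y)" by metis
  obtain c where c: "\<forall>s\<in>insert s0 (sep ` (S - {x})). s \<le> c"
    using directed_finite_upper_bound[OF assms(1), of "insert s0 (sep ` (S - {x}))"] assms(3)
    by blast
  have "x c \<noteq> p c" using c s0 lim[OF assms(5), of s0 c] base[of s0 c] by auto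
  moreover have "y = x" if "y \<in> S" "y c = x c" for y
  proof (rule ccontr)
    assume "y \<noteq> x"
    then have "sep y \<le> c" using c that(1) by blast
    then have "y (sep y) = x (sep y)"
      using lim[OF assms(5), of "sep y" c] lim[OF that(1), of "sep y" c] that(2) by simp
    then show False using sep that(1) \<open>y \<noteq> x\<close> by blast
  qed
  ultimately show ?thesis by blast
qed

lemma rho_coefficient_at_separating_stage:
  assumes "finite S" and "{y. \<phi> y \<noteq> 0} \<subseteq> S" and "x \<in> S"
    and "x c \<noteq> p c" and "\<forall>y\<in>S. y c = x c \<longrightarrow> y = x"
  shows "rho p \<phi> c (x c) = \<phi> x"
proof -
  have "{y\<in>S. y c = x c} = {x}" using assms(3,5) by auto
  then show ?thesis
    unfolding rho_def push_eq_sum[OF assms(1,2)] using assms(4) by simp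
qed

lemma rho_coefficients_divisible:
  fixes X :: "'t::order \<Rightarrow> 'x set"
  assumes "directed TYPE('t)" and "pointed_diagram X p f"
    and "\<phi> \<in> smash (limX X f) p" and "rho p \<phi> = (\<lambda>t y. nmul n (g t y))"
  shows "\<exists>w. nmul n w = \<phi> x"
proof (cases "\<phi> x = 0")
  case True then show ?thesis by (metis nmul_zero)
next
  case False
  define S where "S = {y. \<phi> y \<noteq> 0}"
  have S: "finite S" "S \<subseteq> limX X f" "x \<in> S" "x \<noteq> p"
    using assms(3) False unfolding smash_def S_def by auto
  obtain c where "x c \<noteq> p c" and "\<forall>y\<in>S. y c = x c \<longrightarrow> y = x"
    using limX_separating_stage[OF assms(1,2) S] by blast
  moreover have "{y. \<phi> y \<noteq> 0} \<subseteq> S" by (simp add: S_def)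
  ultimately have "rho p \<phi> c (x c) = \<phi> x"
    using rho_coefficient_at_separating_stage[OF S(1) _ S(3)] by blast
  then show ?thesis using assms(4) by metis
qed

lemma rho_nmul:
  assumes "finite {x. \<psi> x \<noteq> 0}"
  shows "rho p (\<lambda>x. nmul n (\<psi> x)) t y = nmul n (rho p \<psi> t y)"
proof -
  have supp: "{x. nmul n (\<psi> x) \<noteq> 0} \<subseteq> {x. \<psi> x \<noteq> 0}" by auto
  show ?thesis
    unfolding rho_def push_eq_sum[OF assms supp] push_eq_sum[OF assms order_refl]
    by (simp add: nmul_sum)
qed

theorem mainTheorem9:
  fixes X :: "'t::order \<Rightarrow> 'x set" and p :: "'t \<Rightarrow> 'x" and f :: "'t \<Rightarrow> 't \<Rightarrow> 'x \<Rightarrow> 'x"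
  assumes "directed TYPE('t)"
    and "pointed_diagram X p f"
    and "torsion_free_group TYPE('a::ab_group_add)"
  shows "H_torsion_free X p f TYPE('a)"
  unfolding H_torsion_free_def
proof (intro ballI allI impI)
  fix g :: "'t \<Rightarrow> 'x \<Rightarrow> 'a" and n :: nat
  assume n: "n > 0" and "(\<lambda>t y. nmul n (g t y)) \<in> K X p f"
  then obtain \<phi> where \<phi>: "\<phi> \<in> smash (limX X f) p" and ng: "rho p \<phi> = (\<lambda>t y. nmul n (g t y))"
    unfolding K_def by auto
  obtain \<psi> where \<psi>: "\<And>x. nmul n (\<psi> x) = \<phi> x"
    using rho_coefficients_divisible[OF assms(1,2) \<phi> ng] by metis
  have "\<psi> x = 0 \<longleftrightarrow> \<phi> x = 0" for x
    using torsion_free_nmul_cancel[OF assms(3) n, of "\<psi> x" 0] \<psi>[of x] by auto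
  then have \<psi>_smash: "\<psi> \<in> smash (limX X f) p" using \<phi> unfolding smash_def by simp
  then have fin: "finite {x. \<psi> x \<noteq> 0}" unfolding smash_def by simp
  have "\<phi> = (\<lambda>x. nmul n (\<psi> x))" by (rule ext) (simp add: \<psi>)
  then have "nmul n (g t y) = nmul n (rho p \<psi> t y)" for t y
    using fun_cong[OF fun_cong[OF ng, of t], of y] rho_nmul[OF fin, of p n t y] by simp
  then have "g = rho p \<psi>"
    by (intro ext) (rule torsion_free_nmul_cancel[OF assms(3) n])
  then show "g \<in> K X p f" unfolding K_def using \<psi>_smash by blast
qed

end
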